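(* Let $q'>0$, $e'=0$, $q_{\max}>0$, $\mathcal D''_3=\{\omega:0\le\omega\le\pi/2\}$, $\mathcal D_4=\{(q,e):0<q\le q_{\max},\ 0\le e\le1\}$. For each $(q,e)\in\mathcal D_4$, $$\min_{\omega\in\mathcal D''_3}\delta_{\rm nod}=\max\{0,\ q'-Q,\ q-q'\},\qquad \max_{\omega\in\mathcal D''_3}\delta_{\rm nod}=\max\big\{\min\{q'-q,\ Q-q'\},\ |q'-q(1+e)|\big\},$$ where $Q=\frac{q(1+e)}{1-e}$ (possibly $+\infty$).
   Context: Here the trajectory $\mathcal A'$ is a circle of radius $q'$ ($e'=0$), so $r'_+=r'_-=q'$. For $q>0$, $e\in[0,1]$, $\omega$ an angle, define $r_{\pm}=\frac{q(1+e)}{1\pm e\cos\omega}$ (extended-real value $+\infty$ when the denominator vanishes), $d^\pm=q'-r_\pm$, and the nodal distance $\delta_{\rm nod}(q,e,\omega)=\min\{|d^+|,|d^-|\}$. *)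

theory Defs
  imports "HOL-Analysis.Analysis" "HOL-Library.Extended_Real"
begin

definition r_nod :: "real \<Rightarrow> real \<Rightarrow> real \<Rightarrow> real \<Rightarrow> ereal" where
  "r_nod s q e \<omega> = (if 1 + s * e * cos \<omega> = 0 then \<infinity>
                      else ereal (q * (1 + e) / (1 + s * e * cos \<omega>)))"

definition r_plus :: "real \<Rightarrow> real \<Rightarrow> real \<Rightarrow> ereal" where
  "r_plus q e \<omega> = r_nod 1 q e \<omega>"

definition r_minus :: "real \<Rightarrow> real \<Rightarrow> real \<Rightarrow> ereal" where
  "r_minus q e \<omega> = r_nod (-1) q e \<omega>"

definition delta_nod :: "real \<Rightarrow> real \<Rightarrow> real \<Rightarrow> real \<Rightarrow> ereal" where
  "delta_nod q' q e \<omega> =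
     min \<bar>ereal q' - r_plus q e \<omega>\<bar> \<bar>ereal q' - r_minus q e \<omega>\<bar>"

definition Q_apo :: "real \<Rightarrow> real \<Rightarrow> ereal" where
  "Q_apo q e = (if e = 1 then \<infinity> else ereal (q * (1 + e) / (1 - e)))"

end

theory Submission
  imports Defs
begin

text \<open>With \<open>c = cos \<omega> \<in> [0,1]\<close> and \<open>a = q(1+e)\<close>, the nodal radii are
  \<open>r\<^sub>+ = a/(1+ec) \<in> [q,a]\<close> and \<open>r\<^sub>- = a/(1-ec) \<in> [a,Q]\<close>, and every value in these
  intervals is attained.  So \<open>\<delta>\<^sub>n\<^sub>o\<^sub>d\<close> is the distance from \<open>q'\<close> to the nearer of two points
  \<open>x \<le> a \<le> y\<close> of \<open>[q,Q]\<close>: it is at least the distance from \<open>q'\<close> to \<open>[q,Q]\<close>, which is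
  attained at \<open>\<omega> = 0\<close> or, if \<open>q'\<in>[q,Q]\<close>, where a node lies on the circle; and it is at most
  the larger of its values at \<open>\<omega> = \<pi>/2\<close> (both nodes at \<open>a\<close>) and at \<open>\<omega> = 0\<close> (nodes at \<open>q\<close>, \<open>Q\<close>).\<close>

lemma r_plus_at_0: "1 + e \<noteq> 0 \<Longrightarrow> r_plus q e 0 = ereal q"
  by (simp add: r_plus_def r_nod_def)

lemma r_minus_at_0: "r_minus q e 0 = Q_apo q e"
  by (simp add: r_minus_def r_nod_def Q_apo_def)

lemma r_plus_at_pi2: "r_plus q e (pi/2) = ereal (q * (1 + e))"
  by (simp add: r_plus_def r_nod_def)

lemma r_minus_at_pi2: "r_minus q e (pi/2) = ereal (q * (1 + e))"
  by (simp add: r_minus_def r_nod_def)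

lemma r_plus_bounds:
  assumes "0 \<le> q" "0 \<le> e" "0 \<le> cos \<omega>"
  shows "ereal q \<le> r_plus q e \<omega>" "r_plus q e \<omega> \<le> ereal (q * (1 + e))"
proof -
  have ec: "0 \<le> e * cos \<omega>" "e * cos \<omega> \<le> e"
    using assms by (simp_all add: mult_left_le)
  then have r: "r_plus q e \<omega> = ereal (q * (1 + e) / (1 + e * cos \<omega>))"
    by (simp add: r_plus_def r_nod_def)
  have "q * (1 + e * cos \<omega>) \<le> q * (1 + e)"
    using ec assms by (intro mult_left_mono) auto
  then show "ereal q \<le> r_plus q e \<omega>"
    using ec by (simp add: r le_divide_eq)
  have "q * (1 + e) * 1 \<le> q * (1 + e) * (1 + e * cos \<omega>)"
    using ec assms by (intro mult_left_mono) auto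
  then show "r_plus q e \<omega> \<le> ereal (q * (1 + e))"
    using ec by (simp add: r divide_le_eq)
qed

lemma r_minus_bounds:
  assumes "0 \<le> q" "0 \<le> e" "e \<le> 1" "0 \<le> cos \<omega>"
  shows "ereal (q * (1 + e)) \<le> r_minus q e \<omega> \<and> r_minus q e \<omega> \<le> Q_apo q e"
proof (cases "e * cos \<omega> = 1")
  case True
  then have "e = 1"
    using assms mult_left_le[of "cos \<omega>" e] by fastforce
  with True show ?thesis
    by (simp add: r_minus_def r_nod_def Q_apo_def)
next
  case False
  have ec: "0 \<le> e * cos \<omega>" "e * cos \<omega> \<le> e"
    using assms by (simp_all add: mult_left_le)
  with False have ec1: "e * cos \<omega> < 1"
    using assms(3) by linarith
  have r: "r_minus q e \<omega> = ereal (q * (1 + e) / (1 - e * cos \<omega>))"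
    using False by (simp add: r_minus_def r_nod_def)
  have a: "0 \<le> q * (1 + e)"
    using assms by simp
  have "q * (1 + e) * (1 - e * cos \<omega>) \<le> q * (1 + e)"
    using a ec by (simp add: mult_left_le)
  then have "ereal (q * (1 + e)) \<le> r_minus q e \<omega>"
    using ec1 by (simp add: r le_divide_eq)
  moreover have "r_minus q e \<omega> \<le> Q_apo q e"
  proof (cases "e = 1")
    case False
    then have "q * (1 + e) / (1 - e * cos \<omega>) \<le> q * (1 + e) / (1 - e)"
      using a ec assms(3) by (intro divide_left_mono) auto
    with False show ?thesis
      by (simp add: r Q_apo_def)
  qed (simp add: Q_apo_def)
  ultimately show ?thesis ..
qed

lemma r_plus_attains:
  assumes "0 \<le> e" "q \<le> q'" "q' \<le> q * (1 + e)" "0 < q"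
  obtains \<omega> where "\<omega> \<in> {0..pi/2}" "r_plus q e \<omega> = ereal q'"
proof
  \<comment> \<open>For \<open>e = 0\<close> we have \<open>q' = q\<close>, and \<open>c = 0\<close> (division by zero) still works.\<close>
  define c where "c = (q * (1 + e) / q' - 1) / e"
  have q': "0 < q'"
    using assms by linarith
  have ec: "e * c = q * (1 + e) / q' - 1"
    using assms q' by (cases "e = 0") (simp_all add: c_def)
  have "q * (1 + e) / q' \<le> q * (1 + e) / q"
    using assms q' by (intro divide_left_mono) auto
  then have "e * c \<le> e" "0 \<le> e * c"
    using assms q' by (simp_all add: ec)
  then have c: "0 \<le> c" "c \<le> 1"
    using assms(1) by (cases "e = 0"; auto simp: c_def zero_le_mult_iff mult_le_cancel_left1)+
  show "arccos c \<in> {0..pi/2}"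
    using c arccos_lbound arccos_le_pi2 by auto
  have "1 + e * c \<noteq> 0"
    using \<open>0 \<le> e * c\<close> by linarith
  then show "r_plus q e (arccos c) = ereal q'"
    using c q' by (simp add: r_plus_def r_nod_def ec)
qed

lemma r_minus_attains:
  assumes "0 \<le> e" "e \<le> 1" "0 < q" "q * (1 + e) \<le> q'" "ereal q' \<le> Q_apo q e"
  obtains \<omega> where "\<omega> \<in> {0..pi/2}" "r_minus q e \<omega> = ereal q'"
proof
  define c where "c = (1 - q * (1 + e) / q') / e"
  have a: "0 < q * (1 + e)"
    using assms by simp
  then have q': "0 < q'"
    using assms by linarith
  have "q' * (1 - e) \<le> q * (1 + e)"
  proof (cases "e = 1")
    case False
    then have "q' \<le> q * (1 + e) / (1 - e)"
      using assms(5) by (simp add: Q_apo_def)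
    with False assms(2) show ?thesis
      by (simp add: le_divide_eq mult.commute)
  qed (use a in simp)
  then have le_e: "1 - q * (1 + e) / q' \<le> e"
    using q' by (simp add: field_simps)
  moreover have "q * (1 + e) / q' \<le> 1"
    using assms q' by simp
  ultimately have ec: "e * c = 1 - q * (1 + e) / q'"
    using assms(1) by (cases "e = 0") (simp_all add: c_def)
  then have "e * c \<le> e" "0 \<le> e * c"
    using assms q' le_e by simp_all
  then have c: "0 \<le> c" "c \<le> 1"
    using assms(1) by (cases "e = 0"; auto simp: c_def zero_le_mult_iff mult_le_cancel_left1)+
  show "arccos c \<in> {0..pi/2}"
    using c arccos_lbound arccos_le_pi2 by auto
  have "1 - e * c \<noteq> 0"
    using assms(1,3) q' by (simp add: ec)
  then show "r_minus q e (arccos c) = ereal q'"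
    using c q' by (simp add: r_minus_def r_nod_def ec)
qed

lemma distance_to_nearer_node_bounds:
  fixes q a q' :: real and x y Q :: ereal
  assumes "ereal q \<le> x" "x \<le> ereal a" "ereal a \<le> y" "y \<le> Q"
  shows "max 0 (max (ereal q' - Q) (ereal (q - q'))) \<le> min \<bar>ereal q' - x\<bar> \<bar>ereal q' - y\<bar>"
    and "min \<bar>ereal q' - x\<bar> \<bar>ereal q' - y\<bar> \<le> max (min (ereal (q' - q)) (Q - ereal q')) (ereal \<bar>q' - a\<bar>)"
  using assms by (cases x; cases y; cases Q; auto simp: abs_if min_def max_def)+

lemma max_endpoint_distance_cases:
  fixes q a q' :: real and Q :: ereal
  assumes "q \<le> a" "ereal a \<le> Q"
  shows "max (min (ereal (q' - q)) (Q - ereal q')) (ereal \<bar>q' - a\<bar>)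
           \<in> {ereal \<bar>q' - a\<bar>, min \<bar>ereal q' - ereal q\<bar> \<bar>ereal q' - Q\<bar>}"
  using assms by (cases Q; auto simp: abs_if min_def max_def)

lemma min_endpoint_distance_cases:
  fixes q q' :: real and Q :: ereal
  assumes "ereal q \<le> Q"
  shows "max 0 (max (ereal q' - Q) (ereal (q - q'))) = min \<bar>ereal q' - ereal q\<bar> \<bar>ereal q' - Q\<bar>
       \<or> max 0 (max (ereal q' - Q) (ereal (q - q'))) = 0 \<and> q \<le> q' \<and> ereal q' \<le> Q"
  using assms by (cases Q; auto simp: abs_if min_def max_def zero_ereal_def)

lemma delta_nod_at_0:
  "0 \<le> e \<Longrightarrow> delta_nod q' q e 0 = min \<bar>ereal q' - ereal q\<bar> \<bar>ereal q' - Q_apo q e\<bar>"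
  by (simp add: delta_nod_def r_plus_at_0 r_minus_at_0)

lemma delta_nod_at_pi2: "delta_nod q' q e (pi/2) = ereal \<bar>q' - q * (1 + e)\<bar>"
  by (simp add: delta_nod_def r_plus_at_pi2 r_minus_at_pi2)

lemma delta_nod_eq_0_if_node_on_circle:
  "r_plus q e \<omega> = ereal q' \<or> r_minus q e \<omega> = ereal q' \<Longrightarrow> delta_nod q' q e \<omega> = 0"
  by (auto simp: delta_nod_def min_def dest: antisym[OF _ abs_ereal_pos])

lemma delta_nod_attains_0:
  assumes "0 \<le> e" "e \<le> 1" "0 < q" "q \<le> q'" "ereal q' \<le> Q_apo q e"
  obtains \<omega> where "\<omega> \<in> {0..pi/2}" "delta_nod q' q e \<omega> = 0"
proof (cases "q' \<le> q * (1 + e)")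
  case True
  then obtain \<omega> where "\<omega> \<in> {0..pi/2}" "r_plus q e \<omega> = ereal q'"
    using r_plus_attains[OF assms(1,4) _ assms(3)] by blast
  with that show ?thesis
    using delta_nod_eq_0_if_node_on_circle by blast
next
  case False
  then have "q * (1 + e) \<le> q'"
    by simp
  then obtain \<omega> where "\<omega> \<in> {0..pi/2}" "r_minus q e \<omega> = ereal q'"
    using r_minus_attains[OF assms(1-3) _ assms(5)] by blast
  with that show ?thesis
    using delta_nod_eq_0_if_node_on_circle by blast
qed

lemma delta_nod_bounds:
  assumes "0 \<le> q" "0 \<le> e" "e \<le> 1" "\<omega> \<in> {0..pi/2}"
  shows "max 0 (max (ereal q' - Q_apo q e) (ereal (q - q'))) \<le> delta_nod q' q e \<omega>"
    and "delta_nod q' q e \<omega>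
           \<le> max (min (ereal (q' - q)) (Q_apo q e - ereal q')) (ereal \<bar>q' - q * (1 + e)\<bar>)"
proof -
  have "0 \<le> cos \<omega>"
    using assms(4) by (intro cos_ge_zero) auto
  note nodes = r_plus_bounds[OF assms(1,2) this] r_minus_bounds[OF assms(1-3) this]
  show "max 0 (max (ereal q' - Q_apo q e) (ereal (q - q'))) \<le> delta_nod q' q e \<omega>"
    "delta_nod q' q e \<omega>
       \<le> max (min (ereal (q' - q)) (Q_apo q e - ereal q')) (ereal \<bar>q' - q * (1 + e)\<bar>)"
    unfolding delta_nod_def using distance_to_nearer_node_bounds nodes by blast+
qed

theorem proposition10:
  fixes q' qmax q e :: real
  assumes "q' > 0" and "qmax > 0"
    and "0 < q" and "q \<le> qmax" and "0 \<le> e" and "e \<le> 1"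
  shows "(let S = (\<lambda>\<omega>. delta_nod q' q e \<omega>) ` {0..pi/2};
              m = max 0 (max (ereal q' - Q_apo q e) (ereal (q - q')));
              M = max (min (ereal (q' - q)) (Q_apo q e - ereal q')) (ereal \<bar>q' - q * (1 + e)\<bar>)
          in (m \<in> S \<and> (\<forall>x\<in>S. m \<le> x)) \<and> (M \<in> S \<and> (\<forall>x\<in>S. x \<le> M)))"
proof -
  define S where "S = (\<lambda>\<omega>. delta_nod q' q e \<omega>) ` {0..pi/2}"
  define m where "m = max 0 (max (ereal q' - Q_apo q e) (ereal (q - q')))"
  define M where "M = max (min (ereal (q' - q)) (Q_apo q e - ereal q')) (ereal \<bar>q' - q * (1 + e)\<bar>)"
  have endpoints: "delta_nod q' q e 0 \<in> S" "delta_nod q' q e (pi/2) \<in> S"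
    by (simp_all add: S_def)
  have aQ: "ereal (q * (1 + e)) \<le> Q_apo q e"
    using r_minus_bounds[of q e 0] r_minus_at_0 assms by simp
  have qa: "q \<le> q * (1 + e)"
    using assms by simp
  have "ereal q \<le> Q_apo q e"
    using qa aQ by (meson ereal_less_eq(3) order.trans)
  then have "m = delta_nod q' q e 0 \<or> m = 0 \<and> q \<le> q' \<and> ereal q' \<le> Q_apo q e"
    using min_endpoint_distance_cases delta_nod_at_0[OF assms(5)] by (simp add: m_def)
  then have "m \<in> S"
  proof (elim disjE conjE)
    assume "m = 0" "q \<le> q'" "ereal q' \<le> Q_apo q e"
    then obtain \<omega> where "\<omega> \<in> {0..pi/2}" "delta_nod q' q e \<omega> = 0"
      using delta_nod_attains_0[OF assms(5,6,3)] by blast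
    with \<open>m = 0\<close> show "m \<in> S"
      by (force simp: S_def)
  qed (use endpoints in simp)
  moreover have "M \<in> S"
    using max_endpoint_distance_cases[OF qa aQ, of q'] endpoints
      delta_nod_at_0[OF assms(5)] delta_nod_at_pi2 by (auto simp: M_def)
  moreover have "m \<le> x \<and> x \<le> M" if "x \<in> S" for x
    using that delta_nod_bounds[of q e] assms by (auto simp: S_def m_def M_def)
  ultimately show ?thesis
    by (simp add: Let_def S_def m_def M_def)
qed

end
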